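(* Let $\mathcal{A}_1=(Q,R_1,V_1,V_1',f_1)$ and $\mathcal{A}_2=(Q,R_2,V_2,V_2',f_2)$ be two stochastic CA with the same set of states $Q$ and explicit global functions $F_1,F_2$. Then $S_{F_1}=S_{F_2}$ if and only if for every configuration $c\in Q^{\mathbb{Z}}$ there exists a measure $\gamma_c\in\mathcal{M}(R_1^{\mathbb{Z}}\times R_2^{\mathbb{Z}})$ coupling $\mathcal{A}_1$ and $\mathcal{A}_2$ on $c$, i.e. such that (1) $\gamma_c$ is a coupling of $\nu_{R_1}$ and $\nu_{R_2}$, and (2) $\gamma_c\big(\{(s_1,s_2): F_1(c,s_1)=F_2(c,s_2)\}\big)=1$.
   Context: A stochastic CA is a tuple $(Q,R,V,V',f)$ with $Q$ a finite set of states, $R$ a finite set of random symbols, $V=\{v_1,\dots,v_r\}$, $V'=\{v'_1,\dots,v'_{r'}\}$ finite subsets of $\mathbb{Z}$, and $f:Q^r\times R^{r'}\to Q$. Its explicit global function $F:Q^{\mathbb{Z}}\times R^{\mathbb{Z}}\to Q^{\mathbb{Z}}$ is $F(c,s)_z=f\big((c_{z+v_1},\dots,c_{z+v_r}),(s_{z+v'_1},\dots,s_{z+v'_{r'}})\big)$. Cylinders are $[u]_z=\{c: c_{z+x}=u_x,\ 0\le x<|u|\}$; $\nu_R$ is the uniform Bernoulli measure on $R^{\mathbb{Z}}$; $\mathcal{M}(X)$ is the set of Borel probability measures on $X$. The stochastic global function is $S_F:Q^{\mathbb{Z}}\to\mathcal{M}(Q^{\mathbb{Z}})$, $S_F(c)([u]_z)=\nu_R(\{s: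 F(c,s)\in[u]_z\})$. A coupling of $\mu_1\in\mathcal{M}(A_1^{\mathbb{Z}})$ and $\mu_2\in\mathcal{M}(A_2^{\mathbb{Z}})$ is $\gamma\in\mathcal{M}(A_1^{\mathbb{Z}}\times A_2^{\mathbb{Z}})$ with $\gamma(E_1\times A_2^{\mathbb{Z}})=\mu_1(E_1)$ and $\gamma(A_1^{\mathbb{Z}}\times E_2)=\mu_2(E_2)$ for all measurable $E_1,E_2$. *)

theory Defs
  imports "HOL-Probability.Probability"
begin

text \<open>A stochastic CA (Q,R,V,V',f): Q and R are finite types, the neighbourhoods
V = [v_1,...,v_r] and V' = [v'_1,...,v'_r'] are lists of distinct integers,
and the local rule f takes the r-tuple of neighbour states and the r'-tuple of
random symbols (as lists of those lengths).\<close>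

definition explicit_global ::
  "int list \<Rightarrow> int list \<Rightarrow> ('q list \<Rightarrow> 'r list \<Rightarrow> 'q) \<Rightarrow> (int \<Rightarrow> 'q) \<Rightarrow> (int \<Rightarrow> 'r) \<Rightarrow> (int \<Rightarrow> 'q)"
  where "explicit_global V V' f c s =
           (\<lambda>z. f (map (\<lambda>v. c (z + v)) V) (map (\<lambda>v. s (z + v)) V'))"

text \<open>The space A^Z with its product (= Borel, for finite A) sigma algebra.\<close>
definition config_space :: "(int \<Rightarrow> 'a) measure"
  where "config_space = (\<Pi>\<^sub>M z\<in>(UNIV::int set). count_space (UNIV::'a set))"

definition bernoulli_unif :: "(int \<Rightarrow> 'r::finite) measure"
  where "bernoulli_unif = (\<Pi>\<^sub>M z\<in>(UNIV::int set). measure_pmf (pmf_of_set (UNIV::'r set)))"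

definition stoch_global ::
  "((int \<Rightarrow> 'q) \<Rightarrow> (int \<Rightarrow> 'r::finite) \<Rightarrow> (int \<Rightarrow> 'q)) \<Rightarrow> (int \<Rightarrow> 'q) \<Rightarrow> (int \<Rightarrow> 'q) measure"
  where "stoch_global F c = distr bernoulli_unif config_space (F c)"

definition is_coupling :: "('a \<times> 'b) measure \<Rightarrow> 'a measure \<Rightarrow> 'b measure \<Rightarrow> bool"
  where "is_coupling \<gamma> \<mu>1 \<mu>2 \<longleftrightarrow>
           prob_space \<gamma> \<and> sets \<gamma> = sets (\<mu>1 \<Otimes>\<^sub>M \<mu>2) \<and>
           (\<forall>E1\<in>sets \<mu>1. emeasure \<gamma> (E1 \<times> space \<mu>2) = emeasure \<mu>1 E1) \<and>
           (\<forall>E2\<in>sets \<mu>2. emeasure \<gamma> (space \<mu>1 \<times> E2) = emeasure \<mu>2 E2)"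

end

theory Submission
  imports Defs
begin

text \<open>If there is a coupling \<open>\<gamma>\<^sub>c\<close> concentrated on \<open>F\<^sub>1(c,s\<^sub>1) = F\<^sub>2(c,s\<^sub>2)\<close>, the two image laws
  agree because the marginals of \<open>\<gamma>\<^sub>c\<close> are the Bernoulli measures. Conversely, if
  \<open>G\<^sub>k = F\<^sub>k(c,-)\<close> push \<open>\<nu>\<^sub>R\<^sub>1\<close> and \<open>\<nu>\<^sub>R\<^sub>2\<close> to the same law \<open>\<mu>\<close>, draw \<open>y\<close> from \<open>\<mu>\<close> and then \<open>s\<^sub>1\<close>, \<open>s\<^sub>2\<close>
  independently from the conditional laws given \<open>G\<^sub>1 = y\<close> and \<open>G\<^sub>2 = y\<close>. Avoiding regular
  conditional laws, this coupling is built from its finite-dimensional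
  distributions \<open>E\<^sub>\<mu>[P(s\<^sub>1 \<in> C\<^sub>1 | G\<^sub>1 = y) P(s\<^sub>2 \<in> C\<^sub>2 | G\<^sub>2 = y)]\<close> on cylinders, with conditional
  probabilities given by Radon-Nikodym derivatives, and Kolmogorov's extension theorem.
  Since \<open>G\<^sub>k(s) z\<close> depends on finitely many coordinates of \<open>s\<close>, disagreement at \<open>z\<close> is a
  finite union of cylinder rectangles, each of which gets weight zero.\<close>

section \<open>The uniform Bernoulli measure and its cylinders\<close>

lemma space_bernoulli_unif [simp]: "space (bernoulli_unif :: (int \<Rightarrow> 'r::finite) measure) = UNIV"
  by (simp add: bernoulli_unif_def space_PiM)

lemma sets_bernoulli_unif:
  "sets (bernoulli_unif :: (int \<Rightarrow> 'r::finite) measure) = sets (\<Pi>\<^sub>M z\<in>UNIV. count_space UNIV)"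
  unfolding bernoulli_unif_def by (intro sets_PiM_cong) (simp_all add: sets_measure_pmf_count_space)

lemma prob_space_bernoulli_unif: "prob_space (bernoulli_unif :: (int \<Rightarrow> 'r::finite) measure)"
  unfolding bernoulli_unif_def by (intro prob_space_PiM) (simp add: prob_space_measure_pmf)

lemma space_config_space [simp]: "space (config_space :: (int \<Rightarrow> 'a) measure) = UNIV"
  by (simp add: config_space_def space_PiM)

definition cylinder :: "'i set \<Rightarrow> ('i \<Rightarrow> 'a set) \<Rightarrow> ('i \<Rightarrow> 'a) set" where
  "cylinder J B = {s. \<forall>i\<in>J. s i \<in> B i}"

lemma cylinder_cong: "(\<And>i. i \<in> J \<Longrightarrow> B i = B' i) \<Longrightarrow> cylinder J B = cylinder J B'"
  by (auto simp: cylinder_def)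

lemma cylinder_UNIV [simp]: "cylinder J (\<lambda>_. UNIV) = UNIV"
  by (simp add: cylinder_def)

lemma measurable_component_config_space:
  assumes "G \<in> measurable M config_space"
  shows "(\<lambda>x. G x z) \<in> measurable M (count_space UNIV)"
proof -
  have "(\<lambda>y. y z) \<in> measurable config_space (count_space UNIV)"
    unfolding config_space_def by (rule measurable_component_singleton) simp
  with assms show ?thesis
    by (rule measurable_compose)
qed

lemma prod_emb_count_space_eq_cylinder:
  "prod_emb UNIV (\<lambda>_. count_space UNIV) J (Pi\<^sub>E J B) = cylinder J B"
  by (auto simp: prod_emb_iff cylinder_def PiE_iff extensional_def)

lemma cylinder_in_sets_bernoulli_unif:
  assumes "finite J"
  shows "cylinder J B \<in> sets (bernoulli_unif :: (int \<Rightarrow> 'r::finite) measure)"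
  unfolding sets_bernoulli_unif prod_emb_count_space_eq_cylinder[symmetric]
  using assms by (intro sets_PiM_I) auto

lemma cylinder_eq_UN_point_cylinders:
  "cylinder J B = (\<Union>b\<in>Pi\<^sub>E J B. cylinder J (\<lambda>i. {b i}))"
proof
  show "cylinder J B \<subseteq> (\<Union>b\<in>Pi\<^sub>E J B. cylinder J (\<lambda>i. {b i}))"
  proof
    fix s assume "s \<in> cylinder J B"
    then have "restrict s J \<in> Pi\<^sub>E J B" "s \<in> cylinder J (\<lambda>i. {restrict s J i})"
      by (auto simp: cylinder_def)
    then show "s \<in> (\<Union>b\<in>Pi\<^sub>E J B. cylinder J (\<lambda>i. {b i}))" by blast
  qed
qed (auto simp: cylinder_def PiE_iff)

lemma disjoint_family_on_point_cylinders:
  "disjoint_family_on (\<lambda>b. cylinder J (\<lambda>i. {b i})) (Pi\<^sub>E J B)"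
  unfolding disjoint_family_on_def
proof (intro ballI impI)
  fix b b' assume "b \<in> Pi\<^sub>E J B" "b' \<in> Pi\<^sub>E J B" "b \<noteq> b'"
  then obtain i where "i \<in> J" "b i \<noteq> b' i"
    by (metis PiE_ext)
  then show "cylinder J (\<lambda>i. {b i}) \<inter> cylinder J (\<lambda>i. {b' i}) = {}"
    by (auto simp: cylinder_def)
qed

lemma bernoulli_unif_eqI:
  fixes M :: "(int \<Rightarrow> 'r::finite) measure"
  assumes "finite_measure M" and "sets M = sets bernoulli_unif"
    and "\<And>J B. finite J \<Longrightarrow> emeasure M (cylinder J B) = emeasure bernoulli_unif (cylinder J B)"
  shows "M = bernoulli_unif"
  using assms
  by (intro measure_eqI_PiM_infinite[where I=UNIV and M="\<lambda>_. count_space UNIV"])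
     (simp_all add: sets_bernoulli_unif prod_emb_count_space_eq_cylinder)

lemma is_couplingI_marginals:
  assumes "prob_space \<gamma>" and sets_eq: "sets \<gamma> = sets (M1 \<Otimes>\<^sub>M M2)"
    and marginal1: "distr \<gamma> M1 fst = M1" and marginal2: "distr \<gamma> M2 snd = M2"
  shows "is_coupling \<gamma> M1 M2"
proof -
  have space_eq: "space \<gamma> = space M1 \<times> space M2"
    using sets_eq_imp_space_eq[OF sets_eq] by (simp add: space_pair_measure)
  show ?thesis
    unfolding is_coupling_def
  proof (intro conjI ballI)
    fix E1 assume "E1 \<in> sets M1"
    moreover have "fst -` E1 \<inter> space \<gamma> = E1 \<times> space M2"
      using sets.sets_into_space[OF \<open>E1 \<in> sets M1\<close>] by (auto simp: space_eq)
    ultimately show "emeasure \<gamma> (E1 \<times> space M2) = emeasure M1 E1"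
      using marginal1 by (metis emeasure_distr measurable_cong_sets[OF sets_eq refl] measurable_fst)
  next
    fix E2 assume "E2 \<in> sets M2"
    moreover have "snd -` E2 \<inter> space \<gamma> = space M1 \<times> E2"
      using sets.sets_into_space[OF \<open>E2 \<in> sets M2\<close>] by (auto simp: space_eq)
    ultimately show "emeasure \<gamma> (space M1 \<times> E2) = emeasure M2 E2"
      using marginal2 by (metis emeasure_distr measurable_cong_sets[OF sets_eq refl] measurable_snd)
  qed fact+
qed

lemma is_coupling_bernoulli_unifI:
  fixes \<gamma> :: "((int \<Rightarrow> 'r1::finite) \<times> (int \<Rightarrow> 'r2::finite)) measure"
  assumes "prob_space \<gamma>" and sets_eq: "sets \<gamma> = sets (bernoulli_unif \<Otimes>\<^sub>M bernoulli_unif)"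
    and fst_marginal:
      "\<And>J B. finite J \<Longrightarrow> emeasure \<gamma> (cylinder J B \<times> UNIV) = emeasure bernoulli_unif (cylinder J B)"
    and snd_marginal:
      "\<And>J B. finite J \<Longrightarrow> emeasure \<gamma> (UNIV \<times> cylinder J B) = emeasure bernoulli_unif (cylinder J B)"
  shows "is_coupling \<gamma> bernoulli_unif bernoulli_unif"
proof (rule is_couplingI_marginals[OF assms(1,2)])
  interpret prob_space \<gamma> by fact
  have fst: "fst \<in> measurable \<gamma> bernoulli_unif" and snd: "snd \<in> measurable \<gamma> bernoulli_unif"
    by (simp_all add: measurable_cong_sets[OF sets_eq refl])
  have space_eq: "space \<gamma> = UNIV"
    using sets_eq_imp_space_eq[OF sets_eq] by (simp add: space_pair_measure)
  show "distr \<gamma> bernoulli_unif fst = bernoulli_unif"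
  proof (rule bernoulli_unif_eqI)
    show "finite_measure (distr \<gamma> bernoulli_unif fst)"
      using prob_space_distr[OF fst] by (simp add: prob_space_def)
    fix J :: "int set" and B assume "finite J"
    then show "emeasure (distr \<gamma> bernoulli_unif fst) (cylinder J B) = emeasure bernoulli_unif (cylinder J B)"
      by (simp add: emeasure_distr[OF fst cylinder_in_sets_bernoulli_unif] space_eq vimage_fst fst_marginal)
  qed simp
  show "distr \<gamma> bernoulli_unif snd = bernoulli_unif"
  proof (rule bernoulli_unif_eqI)
    show "finite_measure (distr \<gamma> bernoulli_unif snd)"
      using prob_space_distr[OF snd] by (simp add: prob_space_def)
    fix J :: "int set" and B assume "finite J"
    then show "emeasure (distr \<gamma> bernoulli_unif snd) (cylinder J B) = emeasure bernoulli_unif (cylinder J B)"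
      by (simp add: emeasure_distr[OF snd cylinder_in_sets_bernoulli_unif] space_eq vimage_snd snd_marginal)
  qed simp
qed

lemma measurable_map_coordinates:
  "(\<lambda>s. map (\<lambda>v. s (g v)) L) \<in> measurable (bernoulli_unif :: (int \<Rightarrow> 'r::finite) measure) (count_space UNIV)"
proof (induction L)
  case Nil
  show ?case
    unfolding list.map by (rule measurable_const) (simp only: space_count_space UNIV_I)
next
  case (Cons v L)
  have head: "(\<lambda>s. s (g v)) \<in> measurable (bernoulli_unif :: (int \<Rightarrow> 'r) measure) (count_space UNIV)"
    unfolding measurable_cong_sets[OF sets_bernoulli_unif refl]
    by (rule measurable_component_singleton) simp
  have tail: "(\<lambda>s. r # map (\<lambda>v. s (g v)) L) \<in> measurable (bernoulli_unif :: (int \<Rightarrow> 'r) measure) (count_space UNIV)" for r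
    by (rule measurable_compose[OF Cons.IH measurable_count_space])
  have "(\<lambda>s. (\<lambda>r s. r # map (\<lambda>v. s (g v)) L) (s (g v)) s) \<in> measurable (bernoulli_unif :: (int \<Rightarrow> 'r) measure) (count_space UNIV)"
    by (rule measurable_compose_countable'[OF tail head]) (rule countable_finite[OF finite_class.finite_UNIV])
  then show ?case
    by (simp only: list.map)
qed

lemma explicit_global_measurable:
  fixes f :: "'q list \<Rightarrow> ('r::finite) list \<Rightarrow> 'q"
  shows "explicit_global V V' f c \<in> measurable bernoulli_unif config_space"
  unfolding explicit_global_def config_space_def
proof (rule measurable_PiM_single')
  fix z :: int
  show "(\<lambda>s. f (map (\<lambda>v. c (z + v)) V) (map (\<lambda>v. s (z + v)) V')) \<in> measurable bernoulli_unif (count_space UNIV)"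
    by (rule measurable_compose[OF measurable_map_coordinates measurable_count_space])
qed simp

lemma distr_eq_if_coupling_concentrated:
  assumes G1: "G1 \<in> measurable M1 N" and G2: "G2 \<in> measurable M2 N"
    and coupling: "is_coupling \<gamma> M1 M2" and agree: "emeasure \<gamma> {(s1, s2). G1 s1 = G2 s2} = 1"
  shows "distr M1 N G1 = distr M2 N G2"
proof (rule measure_eqI)
  interpret prob_space \<gamma>
    using coupling by (simp add: is_coupling_def)
  have sets_eq: "sets \<gamma> = sets (M1 \<Otimes>\<^sub>M M2)"
    and marginal1: "\<And>E. E \<in> sets M1 \<Longrightarrow> emeasure \<gamma> (E \<times> space M2) = emeasure M1 E"
    and marginal2: "\<And>E. E \<in> sets M2 \<Longrightarrow> emeasure \<gamma> (space M1 \<times> E) = emeasure M2 E"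
    using coupling unfolding is_coupling_def by blast+
  have space_eq: "space \<gamma> = space M1 \<times> space M2"
    using sets_eq_imp_space_eq[OF sets_eq] by (simp add: space_pair_measure)
  have "{(s1, s2). G1 s1 = G2 s2} \<in> sets \<gamma>"
    using agree emeasure_notin_sets by force
  with agree have "AE p in \<gamma>. p \<in> {(s1, s2). G1 s1 = G2 s2}"
    by (intro AE_prob_1) (simp add: measure_def)
  fix B assume "B \<in> sets (distr M1 N G1)"
  then have B: "B \<in> sets N" by simp
  define E1 where "E1 = G1 -` B \<inter> space M1"
  define E2 where "E2 = G2 -` B \<inter> space M2"
  have E1: "E1 \<in> sets M1" and E2: "E2 \<in> sets M2"
    unfolding E1_def E2_def using G1 G2 B by (simp_all add: measurable_sets)
  have "emeasure (distr M1 N G1) B = emeasure \<gamma> (E1 \<times> space M2)"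
    by (simp add: emeasure_distr[OF G1 B] E1_def[symmetric] marginal1[OF E1])
  also have "\<dots> = emeasure \<gamma> (space M1 \<times> E2)"
  proof (rule emeasure_eq_AE)
    show "AE p in \<gamma>. (p \<in> E1 \<times> space M2) = (p \<in> space M1 \<times> E2)"
      using \<open>AE p in \<gamma>. p \<in> {(s1, s2). G1 s1 = G2 s2}\<close> AE_space
    proof eventually_elim
      fix p assume "p \<in> {(s1, s2). G1 s1 = G2 s2}" "p \<in> space \<gamma>"
      then show "(p \<in> E1 \<times> space M2) = (p \<in> space M1 \<times> E2)"
        by (cases p) (simp add: space_eq E1_def E2_def)
    qed
    show "E1 \<times> space M2 \<in> sets \<gamma>" and "space M1 \<times> E2 \<in> sets \<gamma>"
      unfolding sets_eq using E1 E2 by (simp_all add: pair_measureI)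
  qed
  also have "\<dots> = emeasure (distr M2 N G2) B"
    by (simp add: emeasure_distr[OF G2 B] E2_def[symmetric] marginal2[OF E2])
  finally show "emeasure (distr M1 N G1) B = emeasure (distr M2 N G2) B" .
qed simp

section \<open>Conditional probabilities given a measurable map\<close>

text \<open>A version of \<open>P(A | G = y)\<close>; it is determined only up to null sets of \<open>distr M N G\<close>.\<close>

definition cond_prob_given :: "'a measure \<Rightarrow> 'b measure \<Rightarrow> ('a \<Rightarrow> 'b) \<Rightarrow> 'a set \<Rightarrow> 'b \<Rightarrow> ennreal" where
  "cond_prob_given M N G A = RN_deriv (distr M N G) (distr (density M (indicator A)) N G)"

lemma cond_prob_given_measurable [measurable]: "cond_prob_given M N G A \<in> borel_measurable (distr M N G)"
  unfolding cond_prob_given_def by (rule borel_measurable_RN_deriv)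

context prob_space
begin

lemma nn_integral_cond_prob_given:
  assumes G: "G \<in> measurable M N" and A: "A \<in> sets M" and B: "B \<in> sets N"
  shows "(\<integral>\<^sup>+y. cond_prob_given M N G A y * indicator B y \<partial>distr M N G) = emeasure M (A \<inter> G -` B)"
proof -
  let ?K = "distr (density M (indicator A)) N G"
  interpret pushforward: prob_space "distr M N G"
    by (rule prob_space_distr[OF G])
  have G': "G \<in> measurable (density M (indicator A)) N"
    using G by simp
  have K: "emeasure ?K X = emeasure M (A \<inter> G -` X)" if X: "X \<in> sets N" for X
  proof -
    have "G -` X \<inter> space M \<in> sets M"
      using G X by (rule measurable_sets)
    moreover have "A \<inter> (G -` X \<inter> space M) = A \<inter> G -` X"
      using sets.sets_into_space[OF A] by blast
    ultimately show ?thesis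
      using X by (simp add: emeasure_distr[OF G' X] emeasure_restricted[OF A])
  qed
  have "absolutely_continuous (distr M N G) ?K"
    unfolding absolutely_continuous_def
  proof
    fix X assume "X \<in> null_sets (distr M N G)"
    then have X: "X \<in> sets N" and "emeasure M (G -` X \<inter> space M) = 0"
      by (auto simp: null_sets_distr_iff[OF G])
    moreover have "A \<inter> G -` X \<subseteq> G -` X \<inter> space M"
      using sets.sets_into_space[OF A] by blast
    ultimately have "emeasure M (A \<inter> G -` X) = 0"
      using A G by (metis emeasure_eq_0 measurable_sets)
    then show "X \<in> null_sets ?K"
      using X K by (simp add: null_sets_def)
  qed
  then have "density (distr M N G) (cond_prob_given M N G A) = ?K"
    unfolding cond_prob_given_def by (rule pushforward.density_RN_deriv) simp
  then show ?thesis
    using B by (simp add: emeasure_density[symmetric] K)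
qed

lemma AE_eq_cond_prob_given:
  assumes G: "G \<in> measurable M N" and A: "A \<in> sets M" and f: "f \<in> borel_measurable (distr M N G)"
    and integral: "\<And>B. B \<in> sets N \<Longrightarrow> (\<integral>\<^sup>+y. f y * indicator B y \<partial>distr M N G) = emeasure M (A \<inter> G -` B)"
  shows "AE y in distr M N G. cond_prob_given M N G A y = f y"
proof -
  interpret pushforward: prob_space "distr M N G"
    by (rule prob_space_distr[OF G])
  have "density (distr M N G) f = density (distr M N G) (cond_prob_given M N G A)"
  proof (rule measure_eqI)
    fix B assume "B \<in> sets (density (distr M N G) f)"
    then have "B \<in> sets (distr M N G)" by simp
    then show "emeasure (density (distr M N G) f) B = emeasure (density (distr M N G) (cond_prob_given M N G A)) B"
      by (simp add: emeasure_density[OF f] emeasure_density[OF cond_prob_given_measurable] integral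
          nn_integral_cond_prob_given[OF G A])
  qed simp
  then show ?thesis
    by (rule pushforward.density_unique[OF cond_prob_given_measurable f, OF sym])
qed

lemma cond_prob_given_space:
  assumes G: "G \<in> measurable M N"
  shows "AE y in distr M N G. cond_prob_given M N G (space M) y = 1"
proof -
  show ?thesis
  proof (rule AE_eq_cond_prob_given[OF G])
    fix B assume "B \<in> sets N"
    then show "(\<integral>\<^sup>+y. 1 * indicator B y \<partial>distr M N G) = emeasure M (space M \<inter> G -` B)"
      by (simp add: emeasure_distr[OF G] Int_commute)
  qed simp_all
qed

lemma cond_prob_given_UN:
  assumes G: "G \<in> measurable M N" and S: "finite S"
    and A: "\<And>i. i \<in> S \<Longrightarrow> A i \<in> sets M" and disj: "disjoint_family_on A S"
  shows "AE y in distr M N G. cond_prob_given M N G (\<Union>i\<in>S. A i) y = (\<Sum>i\<in>S. cond_prob_given M N G (A i) y)"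
proof -
  show ?thesis
  proof (rule AE_eq_cond_prob_given[OF G])
    fix B assume B: "B \<in> sets N"
    then have GB: "G -` B \<inter> space M \<in> sets M"
      using G by (rule measurable_sets[rotated])
    have AGB: "A i \<inter> G -` B \<in> sets M" if "i \<in> S" for i
    proof -
      have "A i \<inter> G -` B = A i \<inter> (G -` B \<inter> space M)"
        using sets.sets_into_space[OF A[OF that]] by blast
      then show ?thesis
        using A[OF that] GB by simp
    qed
    have "(\<integral>\<^sup>+y. (\<Sum>i\<in>S. cond_prob_given M N G (A i) y) * indicator B y \<partial>distr M N G)
        = (\<Sum>i\<in>S. \<integral>\<^sup>+y. cond_prob_given M N G (A i) y * indicator B y \<partial>distr M N G)"
      using B by (simp add: sum_distrib_right nn_integral_sum)
    also have "\<dots> = (\<Sum>i\<in>S. emeasure M (A i \<inter> G -` B))"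
      using A B by (simp add: nn_integral_cond_prob_given[OF G])
    also have "\<dots> = emeasure M (\<Union>i\<in>S. A i \<inter> G -` B)"
      using AGB disj S by (intro sum_emeasure) (auto simp: disjoint_family_on_def)
    also have "\<dots> = emeasure M ((\<Union>i\<in>S. A i) \<inter> G -` B)"
      by (intro arg_cong[where f="emeasure M"]) blast
    finally show "(\<integral>\<^sup>+y. (\<Sum>i\<in>S. cond_prob_given M N G (A i) y) * indicator B y \<partial>distr M N G)
        = emeasure M ((\<Union>i\<in>S. A i) \<inter> G -` B)" .
  qed (use A S in auto)
qed

lemma cond_prob_given_eq_0_on:
  assumes G: "G \<in> measurable M N" and A: "A \<in> sets M" and B: "B \<in> sets N"
    and disjoint: "A \<inter> G -` B = {}"
  shows "AE y in distr M N G. y \<in> B \<longrightarrow> cond_prob_given M N G A y = 0"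
proof -
  have "(\<integral>\<^sup>+y. cond_prob_given M N G A y * indicator B y \<partial>distr M N G) = 0"
    using nn_integral_cond_prob_given[OF G A B] disjoint by simp
  then have "AE y in distr M N G. cond_prob_given M N G A y * indicator B y = 0"
    using B by (subst (asm) nn_integral_0_iff_AE) auto
  then show ?thesis
    by eventually_elim (auto simp: indicator_def)
qed

end

lemma cond_prob_given_cylinder:
  assumes G: "G \<in> measurable (bernoulli_unif :: (int \<Rightarrow> 'r::finite) measure) N" and J: "finite J"
  shows "AE y in distr bernoulli_unif N G. cond_prob_given bernoulli_unif N G (cylinder J B) y
           = (\<Sum>b\<in>Pi\<^sub>E J B. cond_prob_given bernoulli_unif N G (cylinder J (\<lambda>i. {b i})) y)"
proof -
  interpret prob_space "bernoulli_unif :: (int \<Rightarrow> 'r) measure"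
    by (rule prob_space_bernoulli_unif)
  have "finite (Pi\<^sub>E J B)"
    using J by (intro finite_PiE) auto
  from cond_prob_given_UN[OF G this cylinder_in_sets_bernoulli_unif[OF J] disjoint_family_on_point_cylinders]
  show ?thesis
    by (simp add: cylinder_eq_UN_point_cylinders[symmetric])
qed

section \<open>Pairs of random symbols as a Polish coordinate space\<close>

text \<open>The Kolmogorov extension theorem of the library (locale \<open>polish_projective\<close>) needs Polish
  coordinate spaces, so pairs of symbols are taken in the discrete copy of \<open>'r1 \<times> 'r2\<close>.\<close>

lemma in_discrete_image: "x \<in> discrete ` S \<longleftrightarrow> of_discrete x \<in> S"
  by (metis UNIV_I discrete_inverse image_iff of_discrete_inverse)

lemma range_discrete: "range discrete = UNIV"
  by (auto simp: in_discrete_image)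

lemma sets_borel_discrete [simp]: "S \<in> sets (borel :: 'a discrete measure)"
  by (simp add: open_discrete borel_open)

instance discrete :: (finite) finite
proof
  show "finite (UNIV :: 'a discrete set)"
    by (metis finite finite_imageI range_discrete)
qed

definition unzip :: "('i \<Rightarrow> ('a \<times> 'b) discrete) \<Rightarrow> ('i \<Rightarrow> 'a) \<times> ('i \<Rightarrow> 'b)" where
  "unzip s = ((\<lambda>i. fst (of_discrete (s i))), (\<lambda>i. snd (of_discrete (s i))))"

lemma measurable_pointwise_into_bernoulli_unif:
  fixes f :: "('a::countable) discrete \<Rightarrow> 'r::finite"
  shows "(\<lambda>s i. f (s i)) \<in> measurable (PiM UNIV (\<lambda>_. borel :: 'a discrete measure)) bernoulli_unif"
  unfolding measurable_cong_sets[OF refl sets_bernoulli_unif]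
proof (rule measurable_PiM_single')
  fix i :: int
  have "(\<lambda>s. s i) \<in> measurable (PiM UNIV (\<lambda>_. borel :: 'a discrete measure)) borel"
    by (rule measurable_component_singleton) simp
  moreover have "f \<in> measurable (borel :: 'a discrete measure) (count_space UNIV)"
    by (simp add: measurable_def open_discrete borel_open)
  ultimately show "(\<lambda>s. f (s i)) \<in> measurable (PiM UNIV (\<lambda>_. borel)) (count_space UNIV)"
    by (rule measurable_compose)
qed simp

lemma measurable_unzip:
  "unzip \<in> measurable (PiM UNIV (\<lambda>_. borel :: ('r1::finite \<times> 'r2::finite) discrete measure))
                      (bernoulli_unif \<Otimes>\<^sub>M bernoulli_unif)"
  unfolding unzip_def by (intro measurable_Pair measurable_pointwise_into_bernoulli_unif)

lemma sum_PiE_unzip_mult: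
  fixes f :: "('i \<Rightarrow> 'a) \<Rightarrow> 'c::comm_semiring_1" and g :: "('i \<Rightarrow> 'b) \<Rightarrow> 'c"
  assumes f: "\<And>b b'. (\<And>i. i \<in> J \<Longrightarrow> b i = b' i) \<Longrightarrow> f b = f b'"
    and g: "\<And>b b'. (\<And>i. i \<in> J \<Longrightarrow> b i = b' i) \<Longrightarrow> g b = g b'"
  shows "(\<Sum>a\<in>Pi\<^sub>E J (\<lambda>i. discrete ` (B1 i \<times> B2 i)). f (fst (unzip a)) * g (snd (unzip a)))
       = (\<Sum>b\<in>Pi\<^sub>E J B1. f b) * (\<Sum>b\<in>Pi\<^sub>E J B2. g b)"
proof -
  define zip where "zip = (\<lambda>(b1 :: 'i \<Rightarrow> 'a, b2 :: 'i \<Rightarrow> 'b). restrict (\<lambda>i. discrete (b1 i, b2 i)) J)"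
  have "bij_betw zip (Pi\<^sub>E J B1 \<times> Pi\<^sub>E J B2) (Pi\<^sub>E J (\<lambda>i. discrete ` (B1 i \<times> B2 i)))"
  proof (rule bij_betw_byWitness[where f'="\<lambda>a. (restrict (fst (unzip a)) J, restrict (snd (unzip a)) J)"])
    show "\<forall>p\<in>Pi\<^sub>E J B1 \<times> Pi\<^sub>E J B2. (restrict (fst (unzip (zip p))) J, restrict (snd (unzip (zip p))) J) = p"
      by (auto simp: zip_def unzip_def discrete_inverse fun_eq_iff PiE_iff extensional_def)
    show "\<forall>a\<in>Pi\<^sub>E J (\<lambda>i. discrete ` (B1 i \<times> B2 i)). zip (restrict (fst (unzip a)) J, restrict (snd (unzip a)) J) = a"
      by (auto simp: zip_def unzip_def of_discrete_inverse fun_eq_iff PiE_iff extensional_def)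
  qed (auto simp: zip_def unzip_def PiE_iff in_discrete_image mem_Times_iff discrete_inverse)
  moreover have "f (fst (unzip (zip p))) * g (snd (unzip (zip p))) = f (fst p) * g (snd p)"
    if "p \<in> Pi\<^sub>E J B1 \<times> Pi\<^sub>E J B2" for p
    using f[of "fst (unzip (zip p))" "fst p"] g[of "snd (unzip (zip p))" "snd p"]
    by (simp add: zip_def unzip_def discrete_inverse case_prod_beta)
  ultimately have "(\<Sum>a\<in>Pi\<^sub>E J (\<lambda>i. discrete ` (B1 i \<times> B2 i)). f (fst (unzip a)) * g (snd (unzip a)))
      = (\<Sum>p\<in>Pi\<^sub>E J B1 \<times> Pi\<^sub>E J B2. f (fst p) * g (snd p))"
    by (metis (no_types, lifting) sum.cong sum.reindex_bij_betw)
  then show ?thesis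
    by (simp add: sum_product sum.cartesian_product case_prod_beta)
qed

lemma restrict_preimage_eq_UN_fibres:
  assumes "J \<subseteq> H" and "X \<subseteq> Pi\<^sub>E J (\<lambda>_. UNIV)"
  shows "(\<lambda>f. restrict f J) -` X \<inter> Pi\<^sub>E H (\<lambda>_. UNIV)
       = (\<Union>a\<in>X. Pi\<^sub>E H (\<lambda>i. if i \<in> J then {a i} else UNIV))"
proof (intro equalityI subsetI)
  fix b assume b: "b \<in> (\<lambda>f. restrict f J) -` X \<inter> Pi\<^sub>E H (\<lambda>_. UNIV)"
  then have "b \<in> Pi\<^sub>E H (\<lambda>i. if i \<in> J then {restrict b J i} else UNIV)"
    by (auto simp: PiE_iff)
  with b show "b \<in> (\<Union>a\<in>X. Pi\<^sub>E H (\<lambda>i. if i \<in> J then {a i} else UNIV))"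
    by blast
next
  fix b assume "b \<in> (\<Union>a\<in>X. Pi\<^sub>E H (\<lambda>i. if i \<in> J then {a i} else UNIV))"
  then obtain a where a: "a \<in> X" "b \<in> Pi\<^sub>E H (\<lambda>i. if i \<in> J then {a i} else UNIV)"
    by blast
  then have "restrict b J = a"
    using assms by (fastforce simp: PiE_iff extensional_def split: if_splits)
  with a show "b \<in> (\<lambda>f. restrict f J) -` X \<inter> Pi\<^sub>E H (\<lambda>_. UNIV)"
    by (auto simp: PiE_iff)
qed

lemma disjoint_family_on_fibres:
  fixes J H :: "'i set"
  assumes "J \<subseteq> H"
  shows "disjoint_family_on (\<lambda>a :: 'i \<Rightarrow> 'a. Pi\<^sub>E H (\<lambda>i. if i \<in> J then {a i} else UNIV)) (Pi\<^sub>E J (\<lambda>_. UNIV))"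
  unfolding disjoint_family_on_def
proof (intro ballI impI)
  fix a a' :: "'i \<Rightarrow> 'a" assume "a \<in> Pi\<^sub>E J (\<lambda>_. UNIV)" "a' \<in> Pi\<^sub>E J (\<lambda>_. UNIV)" "a \<noteq> a'"
  then obtain i where i: "i \<in> J" "a i \<noteq> a' i"
    by (metis PiE_ext)
  moreover have "i \<in> H"
    using i assms by blast
  ultimately show "Pi\<^sub>E H (\<lambda>i. if i \<in> J then {a i} else UNIV) \<inter> Pi\<^sub>E H (\<lambda>i. if i \<in> J then {a' i} else UNIV) = {}"
    by (auto simp: PiE_iff dest!: bspec[where x=i])
qed

section \<open>The conditionally independent coupling\<close>

locale equal_pushforwards =
  fixes G1 :: "(int \<Rightarrow> 'r1::finite) \<Rightarrow> (int \<Rightarrow> 'q::countable)"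
    and G2 :: "(int \<Rightarrow> 'r2::finite) \<Rightarrow> (int \<Rightarrow> 'q)"
  assumes G1_measurable: "G1 \<in> measurable bernoulli_unif config_space"
    and G2_measurable: "G2 \<in> measurable bernoulli_unif config_space"
    and distr_eq: "distr bernoulli_unif config_space G1 = distr bernoulli_unif config_space G2"
begin

abbreviation \<mu> :: "(int \<Rightarrow> 'q) measure" where
  "\<mu> \<equiv> distr bernoulli_unif config_space G1"

abbreviation P1 :: "(int \<Rightarrow> 'r1) set \<Rightarrow> (int \<Rightarrow> 'q) \<Rightarrow> ennreal" where
  "P1 \<equiv> cond_prob_given bernoulli_unif config_space G1"

abbreviation P2 :: "(int \<Rightarrow> 'r2) set \<Rightarrow> (int \<Rightarrow> 'q) \<Rightarrow> ennreal" where
  "P2 \<equiv> cond_prob_given bernoulli_unif config_space G2"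

lemma prob_space_\<mu>: "prob_space \<mu>"
  by (rule prob_space.prob_space_distr[OF prob_space_bernoulli_unif G1_measurable])

lemma P1_space: "AE y in \<mu>. P1 UNIV y = 1"
  using prob_space.cond_prob_given_space[OF prob_space_bernoulli_unif G1_measurable] by simp

lemma P2_space: "AE y in \<mu>. P2 UNIV y = 1"
  unfolding distr_eq using prob_space.cond_prob_given_space[OF prob_space_bernoulli_unif G2_measurable]
  by simp

lemma nn_integral_P1: "A \<in> sets bernoulli_unif \<Longrightarrow> (\<integral>\<^sup>+y. P1 A y \<partial>\<mu>) = emeasure bernoulli_unif A"
  using prob_space.nn_integral_cond_prob_given[OF prob_space_bernoulli_unif G1_measurable, of A UNIV]
  by (simp add: sets.top[where M=config_space, simplified])

lemma nn_integral_P2: "A \<in> sets bernoulli_unif \<Longrightarrow> (\<integral>\<^sup>+y. P2 A y \<partial>\<mu>) = emeasure bernoulli_unif A"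
  unfolding distr_eq
  using prob_space.nn_integral_cond_prob_given[OF prob_space_bernoulli_unif G2_measurable, of A UNIV]
  by (simp add: sets.top[where M=config_space, simplified])

text \<open>The law of the coupling on the coordinates \<open>J\<close>: a pair of symbol patterns \<open>(b1, b2)\<close> on \<open>J\<close>
  gets the weight \<open>E\<^sub>\<mu>[P(b1 | G1 = y) P(b2 | G2 = y)]\<close>, i.e. both symbol fields are drawn
  independently given a common image configuration \<open>y\<close>.\<close>

definition fdd_weight :: "int set \<Rightarrow> (int \<Rightarrow> ('r1 \<times> 'r2) discrete) \<Rightarrow> ennreal" where
  "fdd_weight J a = (\<integral>\<^sup>+y. P1 (cylinder J (\<lambda>i. {fst (unzip a) i})) y
                        * P2 (cylinder J (\<lambda>i. {snd (unzip a) i})) y \<partial>\<mu>)"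

definition fdd :: "int set \<Rightarrow> (int \<Rightarrow> ('r1 \<times> 'r2) discrete) measure" where
  "fdd J = distr (density (count_space (Pi\<^sub>E J (\<lambda>_. UNIV))) (fdd_weight J)) (PiM J (\<lambda>_. borel)) (\<lambda>a. a)"

lemma sets_fdd [simp]: "sets (fdd J) = sets (PiM J (\<lambda>_. borel))"
  by (simp add: fdd_def)

lemma space_fdd [simp]: "space (fdd J) = Pi\<^sub>E J (\<lambda>_. UNIV)"
  by (simp add: fdd_def space_PiM)

lemma emeasure_fdd:
  assumes J: "finite J" and X: "X \<in> sets (PiM J (\<lambda>_. borel))"
  shows "emeasure (fdd J) X = (\<Sum>a\<in>X. fdd_weight J a)"
proof -
  have X_sub: "X \<subseteq> Pi\<^sub>E J (\<lambda>_. UNIV)"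
    using sets.sets_into_space[OF X] by (simp add: space_PiM)
  have fin: "finite (Pi\<^sub>E J (\<lambda>_. UNIV :: ('r1 \<times> 'r2) discrete set))"
    using J by (intro finite_PiE) auto
  have "(\<lambda>a. a) \<in> measurable (density (count_space (Pi\<^sub>E J (\<lambda>_. UNIV))) (fdd_weight J))
                              (PiM J (\<lambda>_. borel :: ('r1 \<times> 'r2) discrete measure))"
    by (simp add: measurable_def space_PiM)
  then have "emeasure (fdd J) X = (\<Sum>a\<in>Pi\<^sub>E J (\<lambda>_. UNIV). fdd_weight J a * indicator X a)"
    unfolding fdd_def using X X_sub
    by (simp add: emeasure_distr emeasure_density nn_integral_count_space_finite[OF fin] Int_absorb2)
  also have "\<dots> = (\<Sum>a\<in>X. fdd_weight J a)"
    by (rule sum.mono_neutral_cong_right[OF fin X_sub]) auto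
  finally show ?thesis .
qed

lemma emeasure_fdd_PiE:
  assumes J: "finite J"
  shows "emeasure (fdd J) (Pi\<^sub>E J (\<lambda>i. discrete ` (B1 i \<times> B2 i)))
     = (\<integral>\<^sup>+y. P1 (cylinder J B1) y * P2 (cylinder J B2) y \<partial>\<mu>)"
proof -
  let ?X = "Pi\<^sub>E J (\<lambda>i. discrete ` (B1 i \<times> B2 i))"
  have "emeasure (fdd J) ?X = (\<Sum>a\<in>?X. fdd_weight J a)"
    using J by (intro emeasure_fdd sets_PiM_I_finite) auto
  also have "\<dots> = (\<integral>\<^sup>+y. (\<Sum>a\<in>?X. P1 (cylinder J (\<lambda>i. {fst (unzip a) i})) y
                                  * P2 (cylinder J (\<lambda>i. {snd (unzip a) i})) y) \<partial>\<mu>)"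
    unfolding fdd_weight_def by (rule nn_integral_sum[symmetric]) simp
  also have "\<dots> = (\<integral>\<^sup>+y. (\<Sum>b\<in>Pi\<^sub>E J B1. P1 (cylinder J (\<lambda>i. {b i})) y)
                       * (\<Sum>b\<in>Pi\<^sub>E J B2. P2 (cylinder J (\<lambda>i. {b i})) y) \<partial>\<mu>)"
    by (intro nn_integral_cong sum_PiE_unzip_mult) (metis (mono_tags, lifting) cylinder_cong)+
  also have "\<dots> = (\<integral>\<^sup>+y. P1 (cylinder J B1) y * P2 (cylinder J B2) y \<partial>\<mu>)"
  proof (rule nn_integral_cong_AE)
    have "AE y in \<mu>. P1 (cylinder J B1) y = (\<Sum>b\<in>Pi\<^sub>E J B1. P1 (cylinder J (\<lambda>i. {b i})) y)"
      by (rule cond_prob_given_cylinder[OF G1_measurable J])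
    moreover have "AE y in \<mu>. P2 (cylinder J B2) y = (\<Sum>b\<in>Pi\<^sub>E J B2. P2 (cylinder J (\<lambda>i. {b i})) y)"
      unfolding distr_eq by (rule cond_prob_given_cylinder[OF G2_measurable J])
    ultimately show "AE y in \<mu>. (\<Sum>b\<in>Pi\<^sub>E J B1. P1 (cylinder J (\<lambda>i. {b i})) y)
        * (\<Sum>b\<in>Pi\<^sub>E J B2. P2 (cylinder J (\<lambda>i. {b i})) y) = P1 (cylinder J B1) y * P2 (cylinder J B2) y"
      by eventually_elim simp
  qed
  finally show ?thesis .
qed

lemma prob_space_fdd:
  assumes J: "finite J"
  shows "prob_space (fdd J)"
proof (rule prob_spaceI)
  have "space (fdd J) = Pi\<^sub>E J (\<lambda>i. discrete ` (UNIV \<times> UNIV))"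
    by (simp add: range_discrete)
  then have "emeasure (fdd J) (space (fdd J)) = (\<integral>\<^sup>+y. P1 UNIV y * P2 UNIV y \<partial>\<mu>)"
    using emeasure_fdd_PiE[OF J, of "\<lambda>_. UNIV" "\<lambda>_. UNIV"] by simp
  also have "\<dots> = (\<integral>\<^sup>+y. 1 \<partial>\<mu>)"
    using P1_space P2_space by (intro nn_integral_cong_AE) auto
  also have "\<dots> = 1"
    using prob_space.emeasure_space_1[OF prob_space_\<mu>] by simp
  finally show "emeasure (fdd J) (space (fdd J)) = 1" .
qed

lemma fdd_projective:
  assumes JH: "J \<subseteq> H" and H: "finite H"
  shows "fdd J = distr (fdd H) (PiM J (\<lambda>_. borel)) (\<lambda>f. restrict f J)"
proof (rule measure_eqI)
  have J: "finite J"
    using JH H by (rule finite_subset)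
  fix X assume "X \<in> sets (fdd J)"
  then have X: "X \<in> sets (PiM J (\<lambda>_. borel))" by simp
  then have X_sub: "X \<subseteq> Pi\<^sub>E J (\<lambda>_. UNIV)"
    using sets.sets_into_space[OF X] by (simp add: space_PiM)
  define fibre where "fibre a = Pi\<^sub>E H (\<lambda>i. if i \<in> J then {a i} else UNIV)" for a :: "int \<Rightarrow> ('r1 \<times> 'r2) discrete"
  have restrict_measurable: "(\<lambda>f. restrict f J) \<in> measurable (fdd H) (PiM J (\<lambda>_. borel :: ('r1 \<times> 'r2) discrete measure))"
    using JH by (simp add: measurable_cong_sets[OF sets_fdd refl] measurable_restrict_subset)
  have fibre_weight: "emeasure (fdd H) (fibre a) = fdd_weight J a" for a
  proof -
    define B1 where "B1 i = (if i \<in> J then {fst (unzip a) i} else UNIV)" for i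
    define B2 where "B2 i = (if i \<in> J then {snd (unzip a) i} else UNIV)" for i
    have "fibre a = Pi\<^sub>E H (\<lambda>i. discrete ` (B1 i \<times> B2 i))"
      unfolding fibre_def B1_def B2_def
      by (intro PiE_cong) (auto simp: unzip_def range_discrete image_iff of_discrete_inverse)
    moreover have "cylinder H B1 = cylinder J (\<lambda>i. {fst (unzip a) i})"
      and "cylinder H B2 = cylinder J (\<lambda>i. {snd (unzip a) i})"
      using JH by (auto simp: cylinder_def B1_def B2_def)
    ultimately show ?thesis
      by (simp add: emeasure_fdd_PiE[OF H] fdd_weight_def)
  qed
  have "emeasure (distr (fdd H) (PiM J (\<lambda>_. borel)) (\<lambda>f. restrict f J)) X = emeasure (fdd H) (\<Union>a\<in>X. fibre a)"
    using restrict_preimage_eq_UN_fibres[OF JH X_sub]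
    by (simp add: emeasure_distr[OF restrict_measurable X] fibre_def)
  also have "\<dots> = (\<Sum>a\<in>X. emeasure (fdd H) (fibre a))"
  proof (rule sum_emeasure[symmetric])
    show "fibre ` X \<subseteq> sets (fdd H)"
      unfolding fibre_def using H by (auto intro!: sets_PiM_I_finite)
    show "disjoint_family_on fibre X"
      using disjoint_family_on_fibres[OF JH] X_sub unfolding fibre_def
      by (rule disjoint_family_on_mono[rotated])
    show "finite X"
      using X_sub J by (rule finite_subset[OF _ finite_PiE]) auto
  qed
  also have "\<dots> = emeasure (fdd J) X"
    by (simp add: fibre_weight emeasure_fdd[OF J X])
  finally show "emeasure (fdd J) X = emeasure (distr (fdd H) (PiM J (\<lambda>_. borel)) (\<lambda>f. restrict f J)) X" ..
qed simp

sublocale fdd: polish_projective "UNIV :: int set" fdd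
  unfolding polish_projective_def
  by (rule projective_family.intro) (simp_all add: fdd_projective prob_space_fdd)

definition coupling :: "((int \<Rightarrow> 'r1) \<times> (int \<Rightarrow> 'r2)) measure" where
  "coupling = distr fdd.lim (bernoulli_unif \<Otimes>\<^sub>M bernoulli_unif) unzip"

lemma unzip_measurable_lim: "unzip \<in> measurable fdd.lim (bernoulli_unif \<Otimes>\<^sub>M bernoulli_unif)"
  unfolding measurable_cong_sets[OF fdd.sets_lim refl] by (rule measurable_unzip)

lemma sets_coupling [simp]: "sets coupling = sets (bernoulli_unif \<Otimes>\<^sub>M bernoulli_unif)"
  by (simp add: coupling_def)

lemma prob_space_coupling: "prob_space coupling"
  unfolding coupling_def by (rule fdd.P.prob_space_distr[OF unzip_measurable_lim])

lemma emeasure_coupling_cylinders: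
  assumes J: "finite J"
  shows "emeasure coupling (cylinder J B1 \<times> cylinder J B2)
     = (\<integral>\<^sup>+y. P1 (cylinder J B1) y * P2 (cylinder J B2) y \<partial>\<mu>)"
proof -
  let ?X = "Pi\<^sub>E J (\<lambda>i. discrete ` (B1 i \<times> B2 i))"
  have "cylinder J B1 \<times> cylinder J B2 \<in> sets (bernoulli_unif \<Otimes>\<^sub>M bernoulli_unif)"
    using J by (intro pair_measureI cylinder_in_sets_bernoulli_unif)
  moreover have "unzip -` (cylinder J B1 \<times> cylinder J B2) \<inter> space fdd.lim = prod_emb UNIV (\<lambda>_. borel) J ?X"
    by (auto simp: sets_eq_imp_space_eq[OF fdd.sets_lim] space_PiM unzip_def cylinder_def prod_emb_iff
        PiE_iff in_discrete_image mem_Times_iff extensional_def)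
  ultimately have "emeasure coupling (cylinder J B1 \<times> cylinder J B2) = emeasure fdd.lim (prod_emb UNIV (\<lambda>_. borel) J ?X)"
    unfolding coupling_def by (simp add: emeasure_distr[OF unzip_measurable_lim])
  also have "\<dots> = emeasure (fdd J) ?X"
    using J by (intro fdd.emeasure_lim_emb sets_PiM_I_finite) auto
  also have "\<dots> = (\<integral>\<^sup>+y. P1 (cylinder J B1) y * P2 (cylinder J B2) y \<partial>\<mu>)"
    by (rule emeasure_fdd_PiE[OF J])
  finally show ?thesis .
qed

lemma is_coupling_coupling: "is_coupling coupling bernoulli_unif bernoulli_unif"
proof (rule is_coupling_bernoulli_unifI[OF prob_space_coupling sets_coupling])
  fix J :: "int set" and B :: "int \<Rightarrow> 'r1 set" assume J: "finite J"
  have "emeasure coupling (cylinder J B \<times> UNIV) = (\<integral>\<^sup>+y. P1 (cylinder J B) y * P2 UNIV y \<partial>\<mu>)"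
    using emeasure_coupling_cylinders[OF J, of B "\<lambda>_. UNIV"] by simp
  also have "\<dots> = (\<integral>\<^sup>+y. P1 (cylinder J B) y \<partial>\<mu>)"
    using P2_space by (intro nn_integral_cong_AE) auto
  finally show "emeasure coupling (cylinder J B \<times> UNIV) = emeasure bernoulli_unif (cylinder J B)"
    using J by (simp add: nn_integral_P1 cylinder_in_sets_bernoulli_unif)
next
  fix J :: "int set" and B :: "int \<Rightarrow> 'r2 set" assume J: "finite J"
  have "emeasure coupling (UNIV \<times> cylinder J B) = (\<integral>\<^sup>+y. P1 UNIV y * P2 (cylinder J B) y \<partial>\<mu>)"
    using emeasure_coupling_cylinders[OF J, of "\<lambda>_. UNIV" B] by simp
  also have "\<dots> = (\<integral>\<^sup>+y. P2 (cylinder J B) y \<partial>\<mu>)"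
    using P1_space by (intro nn_integral_cong_AE) auto
  finally show "emeasure coupling (UNIV \<times> cylinder J B) = emeasure bernoulli_unif (cylinder J B)"
    using J by (simp add: nn_integral_P2 cylinder_in_sets_bernoulli_unif)
qed

lemma emeasure_coupling_disagreeing_cylinders:
  assumes J: "finite J"
    and const1: "\<And>s. s \<in> cylinder J B1 \<Longrightarrow> G1 s z = q1"
    and const2: "\<And>s. s \<in> cylinder J B2 \<Longrightarrow> G2 s z = q2"
    and "q1 \<noteq> q2"
  shows "emeasure coupling (cylinder J B1 \<times> cylinder J B2) = 0"
proof -
  have coordinate_neq: "{y :: int \<Rightarrow> 'q. y z \<noteq> q} \<in> sets config_space" for q
    using measurable_sets[OF measurable_component_config_space[OF measurable_ident], of "- {q}"]
    by (simp add: vimage_def Collect_neg_eq[symmetric])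
  have "AE y in \<mu>. y \<in> {y. y z \<noteq> q1} \<longrightarrow> P1 (cylinder J B1) y = 0"
    using const1 by (intro prob_space.cond_prob_given_eq_0_on[OF prob_space_bernoulli_unif G1_measurable
        cylinder_in_sets_bernoulli_unif[OF J] coordinate_neq]) auto
  moreover have "AE y in \<mu>. y \<in> {y. y z \<noteq> q2} \<longrightarrow> P2 (cylinder J B2) y = 0"
    unfolding distr_eq
    using const2 by (intro prob_space.cond_prob_given_eq_0_on[OF prob_space_bernoulli_unif G2_measurable
        cylinder_in_sets_bernoulli_unif[OF J] coordinate_neq]) auto
  ultimately have "AE y in \<mu>. P1 (cylinder J B1) y * P2 (cylinder J B2) y = 0"
    by eventually_elim (use \<open>q1 \<noteq> q2\<close> in auto)
  then show ?thesis
    by (simp add: emeasure_coupling_cylinders[OF J] nn_integral_0_iff_AE)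
qed

text \<open>The rectangles \<open>T a\<close> pinning both symbol fields on \<open>W\<close> cover the product space, and on
  each of them \<open>G1\<close> and \<open>G2\<close> are constant at \<open>z\<close>: either they agree there or \<open>T a\<close> is null.\<close>

lemma coupling_agree_at:
  assumes W: "finite W"
    and local1: "\<And>s s'. (\<And>i. i \<in> W \<Longrightarrow> s i = s' i) \<Longrightarrow> G1 s z = G1 s' z"
    and local2: "\<And>s s'. (\<And>i. i \<in> W \<Longrightarrow> s i = s' i) \<Longrightarrow> G2 s z = G2 s' z"
  shows "AE p in coupling. G1 (fst p) z = G2 (snd p) z"
proof -
  define T where "T a = cylinder W (\<lambda>i. {fst (unzip a) i}) \<times> cylinder W (\<lambda>i. {snd (unzip a) i})"
    for a :: "int \<Rightarrow> ('r1 \<times> 'r2) discrete"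
  have "AE p in coupling. p \<in> T a \<longrightarrow> G1 (fst p) z = G2 (snd p) z" for a
  proof (cases "\<exists>t\<in>T a. G1 (fst t) z \<noteq> G2 (snd t) z")
    case True
    then obtain t where t: "t \<in> T a" "G1 (fst t) z \<noteq> G2 (snd t) z"
      by blast
    have "emeasure coupling (T a) = 0"
      unfolding T_def
    proof (rule emeasure_coupling_disagreeing_cylinders[OF W])
      show "G1 s z = G1 (fst t) z" if "s \<in> cylinder W (\<lambda>i. {fst (unzip a) i})" for s
        using that t(1) by (intro local1) (auto simp: T_def cylinder_def)
      show "G2 s z = G2 (snd t) z" if "s \<in> cylinder W (\<lambda>i. {snd (unzip a) i})" for s
        using that t(1) by (intro local2) (auto simp: T_def cylinder_def)
    qed (rule t(2))
    moreover have "T a \<in> sets coupling"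
      unfolding T_def sets_coupling using W by (intro pair_measureI cylinder_in_sets_bernoulli_unif)
    ultimately show ?thesis
      by (intro AE_I'[of "T a"]) auto
  next
    case False
    then show ?thesis
      by (intro AE_I2) blast
  qed
  then have "AE p in coupling. \<forall>a\<in>Pi\<^sub>E W (\<lambda>_. UNIV). p \<in> T a \<longrightarrow> G1 (fst p) z = G2 (snd p) z"
    using W by (intro AE_finite_allI finite_PiE) auto
  then show ?thesis
  proof eventually_elim
    fix p :: "(int \<Rightarrow> 'r1) \<times> (int \<Rightarrow> 'r2)"
    assume "\<forall>a\<in>Pi\<^sub>E W (\<lambda>_. UNIV). p \<in> T a \<longrightarrow> G1 (fst p) z = G2 (snd p) z"
    moreover have "p \<in> T (restrict (\<lambda>i. discrete (fst p i, snd p i)) W)"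
      by (auto simp: T_def cylinder_def unzip_def discrete_inverse mem_Times_iff)
    moreover have "restrict (\<lambda>i. discrete (fst p i, snd p i)) W \<in> Pi\<^sub>E W (\<lambda>_. UNIV)"
      by simp
    ultimately show "G1 (fst p) z = G2 (snd p) z"
      by blast
  qed
qed

lemma emeasure_coupling_agree:
  assumes W: "\<And>z. finite (W z)"
    and local1: "\<And>z s s'. (\<And>i. i \<in> W z \<Longrightarrow> s i = s' i) \<Longrightarrow> G1 s z = G1 s' z"
    and local2: "\<And>z s s'. (\<And>i. i \<in> W z \<Longrightarrow> s i = s' i) \<Longrightarrow> G2 s z = G2 s' z"
  shows "emeasure coupling {(s1, s2). G1 s1 = G2 s2} = 1"
proof -
  interpret prob_space coupling
    by (rule prob_space_coupling)
  have [measurable]: "(\<lambda>p. G1 (fst p) z) \<in> measurable coupling (count_space UNIV)"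
    and [measurable]: "(\<lambda>p. G2 (snd p) z) \<in> measurable coupling (count_space UNIV)" for z
    unfolding measurable_cong_sets[OF sets_coupling refl]
    by (rule measurable_compose[OF measurable_fst measurable_component_config_space[OF G1_measurable]],
        rule measurable_compose[OF measurable_snd measurable_component_config_space[OF G2_measurable]])
  have "Measurable.pred coupling (\<lambda>p. \<forall>z. \<exists>q. G1 (fst p) z = q \<and> G2 (snd p) z = q)"
    by measurable
  moreover have "{(s1, s2). G1 s1 = G2 s2} = {p \<in> space coupling. \<forall>z. \<exists>q. G1 (fst p) z = q \<and> G2 (snd p) z = q}"
    by (auto simp: sets_eq_imp_space_eq[OF sets_coupling] space_pair_measure fun_eq_iff)
  ultimately have "{(s1, s2). G1 s1 = G2 s2} \<in> sets coupling"
    by (simp add: pred_def)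
  moreover have "AE p in coupling. G1 (fst p) z = G2 (snd p) z" for z
    using W local1 local2 by (rule coupling_agree_at)
  then have "AE p in coupling. \<forall>z. G1 (fst p) z = G2 (snd p) z"
    by (simp add: AE_all_countable)
  ultimately show ?thesis
    by (intro emeasure_eq_1_AE) (auto simp: fun_eq_iff)
qed

end

lemma explicit_global_local:
  assumes "\<And>i. i \<in> (\<lambda>v. z + v) ` set V' \<Longrightarrow> s i = s' i"
  shows "explicit_global V V' f c s z = explicit_global V V' f c s' z"
  using assms unfolding explicit_global_def by (intro arg_cong[where f="f _"] map_cong) auto

theorem theorem2:
  fixes V1 V1' V2 V2' :: "int list"
    and f1 :: "('q::finite) list \<Rightarrow> ('r1::finite) list \<Rightarrow> 'q"
    and f2 :: "'q list \<Rightarrow> ('r2::finite) list \<Rightarrow> 'q"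
  assumes "distinct V1" "distinct V1'" "distinct V2" "distinct V2'"
  shows "stoch_global (explicit_global V1 V1' f1) = stoch_global (explicit_global V2 V2' f2)
     \<longleftrightarrow> (\<forall>c :: int \<Rightarrow> 'q. \<exists>\<gamma> :: ((int \<Rightarrow> 'r1) \<times> (int \<Rightarrow> 'r2)) measure.
            is_coupling \<gamma> bernoulli_unif bernoulli_unif \<and>
            emeasure \<gamma> {(s1, s2). explicit_global V1 V1' f1 c s1 = explicit_global V2 V2' f2 c s2} = 1)"
    (is "?equal \<longleftrightarrow> (\<forall>c. \<exists>\<gamma>. is_coupling \<gamma> _ _ \<and> emeasure \<gamma> (?agree c) = 1)")
proof
  assume ?equal
  show "\<forall>c. \<exists>\<gamma>. is_coupling \<gamma> bernoulli_unif bernoulli_unif \<and> emeasure \<gamma> (?agree c) = 1"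
  proof
    fix c :: "int \<Rightarrow> 'q"
    interpret equal_pushforwards "explicit_global V1 V1' f1 c" "explicit_global V2 V2' f2 c"
      using fun_cong[OF \<open>?equal\<close>, of c]
      by unfold_locales (simp_all add: explicit_global_measurable stoch_global_def)
    have "emeasure coupling (?agree c) = 1"
      by (rule emeasure_coupling_agree[where W="\<lambda>z. (\<lambda>v. z + v) ` set V1' \<union> (\<lambda>v. z + v) ` set V2'"])
         (auto intro: explicit_global_local)
    with is_coupling_coupling show "\<exists>\<gamma>. is_coupling \<gamma> bernoulli_unif bernoulli_unif \<and> emeasure \<gamma> (?agree c) = 1"
      by blast
  qed
next
  assume "\<forall>c. \<exists>\<gamma>. is_coupling \<gamma> bernoulli_unif bernoulli_unif \<and> emeasure \<gamma> (?agree c) = 1"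
  then show ?equal
    unfolding stoch_global_def
    by (metis distr_eq_if_coupling_concentrated explicit_global_measurable)
qed

end
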